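(* Let $n>p>1$, $X\in\mathbb{R}^{n\times p}$ with rows $x_1^T,\dots,x_n^T$, $Y=(y_1,\dots,y_n)^T$, $p\le h<n$, and assume that for every $(\circ_1,\dots,\circ_{n-1})\in\{+,-\}^{n-1}$ the $(n-1)\times p$ matrix with rows $(x_1\circ_kx_{k+1})^T$, $k=1,\dots,n-1$, has rank $p$. Let $l\in\{2,\dots,p\}$, let $i_1,\dots,i_l\in\{1,\dots,n\}$ be pairwise distinct and $\circ_1,\dots,\circ_{l-1}\in\{+,-\}$. If the system of $l-1$ equations $(x_{i_1}\circ_kx_{i_{k+1}})^T\beta=y_{i_1}\circ_ky_{i_{k+1}}$, $k=1,\dots,l-1$, has rank $l-1$, then there exist $i_{l+1}\in\{1,\dots,n\}\setminus\{i_1,\dots,i_l\}$ and $\circ_l\in\{+,-\}$ such that the system of the $l$ equations $(x_{i_1}\circ_kx_{i_{k+1}})^T\beta=y_{i_1}\circ_ky_{i_{k+1}}$, $k=1,\dots,l$, has rank $l$. Moreover, if some solution $\beta$ of the $(l-1)$-equation system satisfies $r^2_{i_1}(\beta)=r^2_{(h)}(\beta)=r^2_{(h+1)}(\beta)$, then $i_{l+1}$ can be chosen so that there exists $\beta_1\in\mathbb{R}^p$ with $r^2_{i_1}(\beta_1)=\dots=r^2_{i_l}(\beta_1)=r^2_{i_{l+1}}(\beta_1)=r^2_{(h)}(\beta_1)=r^2_{(h+1)}(\beta_1)$.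
   Context: $r_i(\beta)=y_i-x_i^T\beta$; $r^2_{(1)}(\beta)\le\dots\le r^2_{(n)}(\beta)$ are the sorted squared residuals. For $\circ\in\{+,-\}$, $a\circ b$ is $a+b$ or $a-b$. The rank of a linear system means the rank of its coefficient matrix. *)

theory Defs
  imports "HOL-Analysis.Analysis"
begin

definition sop :: "bool \<Rightarrow> 'a::ab_group_add \<Rightarrow> 'a \<Rightarrow> 'a" where
  "sop s a b = (if s then a + b else a - b)"

definition resid :: "(nat \<Rightarrow> real^'p) \<Rightarrow> (nat \<Rightarrow> real) \<Rightarrow> nat \<Rightarrow> real^'p \<Rightarrow> real" where
  "resid x y i \<beta> = y i - x i \<bullet> \<beta>"

definition sq_resid_ord :: "nat \<Rightarrow> (nat \<Rightarrow> real^'p) \<Rightarrow> (nat \<Rightarrow> real) \<Rightarrow> nat \<Rightarrow> real^'p \<Rightarrow> real" where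
  "sq_resid_ord n x y h \<beta> = sort (map (\<lambda>i. (resid x y i \<beta>)\<^sup>2) [1..<n+1]) ! (h - 1)"

definition rows_rank :: "(nat \<Rightarrow> real^'p) \<Rightarrow> nat set \<Rightarrow> nat" where
  "rows_rank r K = dim (span (r ` K))"

end

theory Submission
  imports Defs
begin

(* Let V be the span of the l - 1 rows x_{i_1} o_k x_{i_{k+1}}.  Since dim V = l - 1 < p while
   the rows x_1 + x_{k+1} span R^p, some index m outside {i_1, ..., i_l} has x_{i_1} or x_m
   outside V; then x_{i_1} + x_m or x_{i_1} - x_m is outside V and the rank goes up.

   For the second claim, move a solution beta_0 along a direction d orthogonal to V that is not
   orthogonal to both x_{i_1} and x_m.  The l - 1 equations stay solved, so r_{i_1}^2 = ... =
   r_{i_l}^2 all along the line.  For every index k outside {i_1, ..., i_l}, r_k + r_{i_1} and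
   r_k - r_{i_1} are affine in the step t, and r_k^2 - r_{i_1}^2 is their product.  Stopping at
   the root of smallest modulus among them, none has changed sign, so no squared residual has
   crossed r_{i_1}^2: the h-th and (h+1)-th order statistics still equal r_{i_1}^2, and at the
   root a new index j ties with i_1.  As d moves x_{i_1} or x_j, the new row can be chosen
   outside V. *)

section \<open>Order statistics of sorted lists\<close>

lemma sorted_nth_less_imp_less:
  assumes "sorted s" "i < length s" "s ! i < s ! j"
  shows "i < j"
  using sorted_nth_mono[OF assms(1), of j i] assms(2,3) by (meson leD leI)

lemma sorted_count_less_le_iff:
  fixes s :: "'a::linorder list"
  assumes "sorted s" "k < length s"
  shows "length (filter (\<lambda>v. v < w) s) \<le> k \<longleftrightarrow> w \<le> s ! k"
proof
  assume "w \<le> s ! k"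
  then have "{i. i < length s \<and> s ! i < w} \<subseteq> {..<k}"
    using sorted_nth_less_imp_less[OF assms(1)] by (auto intro: less_le_trans)
  then have "card {i. i < length s \<and> s ! i < w} \<le> card {..<k}"
    by (rule card_mono[OF finite_lessThan])
  then show "length (filter (\<lambda>v. v < w) s) \<le> k"
    by (simp add: length_filter_conv_card)
next
  assume count: "length (filter (\<lambda>v. v < w) s) \<le> k"
  show "w \<le> s ! k"
  proof (rule ccontr)
    assume "\<not> w \<le> s ! k"
    then have "{..k} \<subseteq> {i. i < length s \<and> s ! i < w}"
      using sorted_nth_mono[OF assms(1), of _ k] assms(2) by (force simp: not_le intro: le_less_trans)
    then have "card {..k} \<le> card {i. i < length s \<and> s ! i < w}"
      by (intro card_mono) simp_all
    with count show False by (simp add: length_filter_conv_card)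
  qed
qed

lemma sorted_count_greater_less_iff:
  fixes s :: "'a::linorder list"
  assumes "sorted s" "k < length s"
  shows "length (filter (\<lambda>v. w < v) s) < length s - k \<longleftrightarrow> s ! k \<le> w"
proof
  assume "s ! k \<le> w"
  then have "{i. i < length s \<and> w < s ! i} \<subseteq> {Suc k..<length s}"
    using sorted_nth_less_imp_less[OF assms(1) assms(2)] by (force simp: Suc_le_eq intro: le_less_trans)
  then have "card {i. i < length s \<and> w < s ! i} \<le> card {Suc k..<length s}"
    by (rule card_mono[OF finite_atLeastLessThan])
  then show "length (filter (\<lambda>v. w < v) s) < length s - k"
    using assms(2) by (simp add: length_filter_conv_card)
next
  assume count: "length (filter (\<lambda>v. w < v) s) < length s - k"
  show "s ! k \<le> w"
  proof (rule ccontr)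
    assume "\<not> s ! k \<le> w"
    then have "{k..<length s} \<subseteq> {i. i < length s \<and> w < s ! i}"
      using sorted_nth_mono[OF assms(1), of k] by (force simp: not_le intro: less_le_trans)
    then have "card {k..<length s} \<le> card {i. i < length s \<and> w < s ! i}"
      by (intro card_mono) simp_all
    with count show False by (simp add: length_filter_conv_card)
  qed
qed

lemma length_filter_mono:
  "(\<And>a. a \<in> set xs \<Longrightarrow> P a \<Longrightarrow> Q a) \<Longrightarrow> length (filter P xs) \<le> length (filter Q xs)"
  by (induct xs) auto

definition same_sign_or_zero :: "real \<Rightarrow> real \<Rightarrow> bool" where
  "same_sign_or_zero a b \<longleftrightarrow> a = 0 \<or> 0 < a * b"

lemma same_sign_or_zero_mult:
  "same_sign_or_zero a b \<Longrightarrow> same_sign_or_zero a' b' \<Longrightarrow> same_sign_or_zero (a * a') (b * b')"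
  unfolding same_sign_or_zero_def
  by (metis mult_eq_0_iff mult_pos_pos mult.assoc mult.left_commute)

lemma sort_map_nth_transfer:
  fixes f g :: "'a \<Rightarrow> real"
  assumes k: "k < length xs"
    and same_sign: "\<forall>a\<in>set xs. same_sign_or_zero (f a - v) (g a - w)"
    and g_k: "sort (map g xs) ! k = w"
  shows "sort (map f xs) ! k = v"
proof -
  have count_sort: "length (filter P (sort (map h xs))) = length (filter (P \<circ> h) xs)"
    for P and h :: "'a \<Rightarrow> real"
    by (simp add: filter_sort filter_map)
  have "length (filter (\<lambda>a. f a < v) xs) \<le> length (filter (\<lambda>a. g a < w) xs)"
    using same_sign
    by (intro length_filter_mono) (force simp: same_sign_or_zero_def mult_less_0_iff zero_less_mult_iff)
  also have "\<dots> \<le> k"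
    using sorted_count_less_le_iff[of "sort (map g xs)" k w] k g_k
    by (simp add: count_sort o_def)
  finally have lower: "v \<le> sort (map f xs) ! k"
    using sorted_count_less_le_iff[of "sort (map f xs)" k v] k
    by (simp add: count_sort o_def)
  have "length (filter (\<lambda>a. v < f a) xs) \<le> length (filter (\<lambda>a. w < g a) xs)"
    using same_sign
    by (intro length_filter_mono) (force simp: same_sign_or_zero_def mult_less_0_iff zero_less_mult_iff)
  also have "\<dots> < length xs - k"
    using sorted_count_greater_less_iff[of "sort (map g xs)" k w] k g_k
    by (simp add: count_sort o_def)
  finally have "sort (map f xs) ! k \<le> v"
    using sorted_count_greater_less_iff[of "sort (map f xs)" k v] k
    by (simp add: count_sort o_def)
  then show ?thesis using lower by (rule order.antisym)
qed

lemma sq_resid_ord_transfer: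
  assumes "1 \<le> h" "h \<le> n"
    and "\<forall>k\<in>{1..n}. same_sign_or_zero ((resid x y k \<beta>1)\<^sup>2 - v) ((resid x y k \<beta>0)\<^sup>2 - w)"
    and "sq_resid_ord n x y h \<beta>0 = w"
  shows "sq_resid_ord n x y h \<beta>1 = v"
  unfolding sq_resid_ord_def
proof (rule sort_map_nth_transfer[where g = "\<lambda>k. (resid x y k \<beta>0)\<^sup>2" and w = w])
  show "h - 1 < length [1..<n+1]" using assms(1,2) by simp
  show "\<forall>k\<in>set [1..<n+1]. same_sign_or_zero ((resid x y k \<beta>1)\<^sup>2 - v) ((resid x y k \<beta>0)\<^sup>2 - w)"
    using assms(3) by (simp del: upt_Suc add: atLeastLessThanSuc_atLeastAtMost)
  show "sort (map (\<lambda>k. (resid x y k \<beta>0)\<^sup>2) [1..<n+1]) ! (h - 1) = w"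
    using assms(4) by (simp add: sq_resid_ord_def)
qed

section \<open>The first root along a line\<close>

lemma same_sign_or_zero_shift:
  fixes q t c :: real
  assumes "\<bar>t\<bar> \<le> \<bar>q\<bar>"
  shows "same_sign_or_zero (c * (q - t)) (c * q)"
proof -
  have "q = t \<or> 0 < (q - t) * q"
    using assms by (cases "0 \<le> q") (auto simp: zero_less_mult_iff)
  moreover have "0 < c * (q - t) * (c * q)" if "c \<noteq> 0" "0 < (q - t) * q"
  proof -
    have "c * (q - t) * (c * q) = c\<^sup>2 * ((q - t) * q)"
      by (simp add: power2_eq_square ac_simps)
    then show ?thesis using that by (metis mult_pos_pos zero_less_power2)
  qed
  ultimately show ?thesis
    unfolding same_sign_or_zero_def by auto
qed
lemma exists_nearest_root:
  fixes \<rho> \<alpha> :: "'a \<Rightarrow> real"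
  assumes "finite S" "s0 \<in> S" "\<alpha> s0 \<noteq> 0"
  shows "\<exists>s\<in>S. \<exists>t. \<alpha> s \<noteq> 0 \<and> \<rho> s - \<alpha> s * t = 0
           \<and> (\<forall>s'\<in>S. same_sign_or_zero (\<rho> s' - \<alpha> s' * t) (\<rho> s'))"
proof -
  let ?Z = "{s\<in>S. \<alpha> s \<noteq> 0}"
  let ?root = "\<lambda>s. \<rho> s / \<alpha> s"
  obtain s where s: "s \<in> ?Z" and nearest: "\<And>s'. s' \<in> ?Z \<Longrightarrow> \<bar>?root s\<bar> \<le> \<bar>?root s'\<bar>"
    using ex_is_arg_min_if_finite[of ?Z "\<lambda>s. \<bar>?root s\<bar>"] assms
    by (auto simp: is_arg_min_def not_less)
  have "same_sign_or_zero (\<rho> s' - \<alpha> s' * ?root s) (\<rho> s')" if "s' \<in> S" for s'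
  proof (cases "\<alpha> s' = 0")
    case True
    then show ?thesis by (auto simp: same_sign_or_zero_def zero_less_mult_iff linorder_neq_iff)
  next
    case False
    have "same_sign_or_zero (\<alpha> s' * (?root s' - ?root s)) (\<alpha> s' * ?root s')"
      using nearest that False by (intro same_sign_or_zero_shift) simp
    moreover have "\<alpha> s' * (?root s' - ?root s) = \<rho> s' - \<alpha> s' * ?root s" "\<alpha> s' * ?root s' = \<rho> s'"
      using False by (simp_all add: algebra_simps)
    ultimately show ?thesis by (simp only:)
  qed
  moreover have "\<alpha> s \<noteq> 0" "\<rho> s - \<alpha> s * ?root s = 0" "s \<in> S"
    using s by simp_all
  ultimately show ?thesis by blast
qed

section \<open>Rows with sign choices\<close>

lemma sq_diff_eq_sop_mult:
  fixes u v :: "'a::comm_ring_1"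
  shows "u\<^sup>2 - v\<^sup>2 = sop True u v * sop False u v"
  by (simp add: sop_def power2_eq_square algebra_simps)

lemma sop_eq_0_imp_sq_eq:
  fixes u v :: "'a::idom"
  shows "sop s u v = 0 \<Longrightarrow> u\<^sup>2 = v\<^sup>2"
  using sq_diff_eq_sop_mult[of u v] by (cases s) auto

definition chain_row ::
    "(nat \<Rightarrow> bool) \<Rightarrow> (nat \<Rightarrow> 'a::ab_group_add) \<Rightarrow> (nat \<Rightarrow> nat) \<Rightarrow> nat \<Rightarrow> 'a" where
  "chain_row c x i k = sop (c k) (x (i 1)) (x (i (k+1)))"

lemma sop_resid:
  "sop s (resid x y a \<beta>) (resid x y b \<beta>) = sop s (y a) (y b) - sop s (x a) (x b) \<bullet> \<beta>"
  by (cases s) (simp_all add: sop_def resid_def inner_add_left inner_diff_left)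

lemma resid_add_scaleR: "resid x y k (\<beta> + t *\<^sub>R d) = resid x y k \<beta> - t * (x k \<bullet> d)"
  by (simp add: resid_def inner_add_right algebra_simps)

lemma chain_sq_resid_eq:
  assumes "\<forall>k\<in>{1..l-1}. chain_row c x i k \<bullet> \<beta> = chain_row c y i k" "k \<in> {1..l}"
  shows "(resid x y (i k) \<beta>)\<^sup>2 = (resid x y (i 1) \<beta>)\<^sup>2"
proof (cases "k = 1")
  case False
  then have "k - 1 \<in> {1..l-1}" "k - 1 + 1 = k" using assms(2) by auto
  then have "sop (c (k-1)) (resid x y (i 1) \<beta>) (resid x y (i k) \<beta>) = 0"
    using assms(1) by (force simp: sop_resid chain_row_def)
  then show ?thesis by (metis sop_eq_0_imp_sq_eq)
qed simp

lemma sop_eq_0_iff_all: "(\<forall>s. sop s u v = 0) \<longleftrightarrow> u = 0 \<and> v = (0::real)"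
proof
  assume "\<forall>s. sop s u v = 0"
  then have "u + v = 0" "u - v = 0"
    using sop_def[of True u v] sop_def[of False u v] by simp_all
  then show "u = 0 \<and> v = 0" by linarith
qed (simp add: sop_def)

lemma sop_in_span_cancel:
  assumes "sop s u v \<in> span S" "u \<in> span S"
  shows "v \<in> span S"
proof -
  have "sop s u v - u \<in> span S" "u - sop s u v \<in> span S"
    using assms by (simp_all add: span_diff)
  then show ?thesis by (cases s) (simp_all add: sop_def)
qed

lemma exists_sop_not_in_span:
  assumes "u \<notin> span S \<or> v \<notin> span S"
  shows "\<exists>s. sop s u v \<notin> span S"
proof (rule ccontr)
  assume "\<not> ?thesis"
  then have plus: "sop True u v \<in> span S" and minus: "sop False u v \<in> span S"
    by blast+
  then have "inverse 2 *\<^sub>R (sop True u v + sop False u v) \<in> span S"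
    by (intro span_scale span_add)
  moreover have "inverse 2 *\<^sub>R (sop True u v + sop False u v) = u"
    by (simp add: sop_def scaleR_2[symmetric] del: scaleR_2)
  ultimately have "u \<in> span S" by simp
  moreover then have "v \<in> span S"
    using plus by (rule sop_in_span_cancel[rotated])
  ultimately show False using assms by blast
qed

lemma exists_orthogonal_witness:
  fixes u :: "'a::euclidean_space"
  assumes "u \<notin> span S"
  obtains d where "\<forall>w\<in>span S. w \<bullet> d = 0" "u \<bullet> d \<noteq> 0"
proof -
  obtain v d where v: "v \<in> span S" and orth: "\<And>w. w \<in> span S \<Longrightarrow> orthogonal d w"
    and u: "u = v + d"
    using orthogonal_subspace_decomp_exists by metis
  have "w \<bullet> d = 0" if "w \<in> span S" for w
    using orth[OF that] by (simp add: orthogonal_def inner_commute)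
  moreover have "u \<bullet> d \<noteq> 0"
  proof -
    have "d \<noteq> 0" using assms v u by auto
    moreover have "v \<bullet> d = 0" using v \<open>\<And>w. w \<in> span S \<Longrightarrow> w \<bullet> d = 0\<close> by blast
    ultimately show ?thesis by (simp add: u inner_add_left)
  qed
  ultimately show ?thesis using that by blast
qed

lemma chain_member_in_span:
  assumes "x (i 1) \<in> span (chain_row c x i ` {1..l-1})" "k \<in> {1..l}"
  shows "x (i k) \<in> span (chain_row c x i ` {1..l-1})"
proof (cases "k = 1")
  case False
  then have "k - 1 \<in> {1..l-1}" "k - 1 + 1 = k" using assms(2) by auto
  then have "sop (c (k-1)) (x (i 1)) (x (i k)) \<in> span (chain_row c x i ` {1..l-1})"
    by (metis chain_row_def imageI span_base)
  then show ?thesis using assms(1) by (rule sop_in_span_cancel)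
qed (use assms in simp)

lemma exists_index_not_in_span:
  fixes x :: "nat \<Rightarrow> real^'p"
  assumes "dim S < rows_rank (\<lambda>k. x 1 + x (k+1)) {1..n-1}"
  shows "\<exists>k\<in>{1..n}. x k \<notin> span S"
proof (rule ccontr)
  assume "\<not> ?thesis"
  then have "x 1 + x (k+1) \<in> span S" if "k \<in> {1..n-1}" for k
    using that by (intro span_add) auto
  then have "(\<lambda>k. x 1 + x (k+1)) ` {1..n-1} \<subseteq> span S"
    by blast
  then have "span ((\<lambda>k. x 1 + x (k+1)) ` {1..n-1}) \<subseteq> span S"
    by (simp add: span_minimal)
  then have "rows_rank (\<lambda>k. x 1 + x (k+1)) {1..n-1} \<le> dim S"
    unfolding rows_rank_def by (metis dim_span dim_subset)
  with assms show False by simp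
qed

lemma exists_rows_rank_chain_extension:
  assumes "1 \<le> l"
    and "x (i 1) \<notin> span (chain_row c x i ` {1..l-1}) \<or> x j \<notin> span (chain_row c x i ` {1..l-1})"
  shows "\<exists>b. rows_rank (\<lambda>k. sop ((c(l := b)) k) (x (i 1)) (x ((i(l+1 := j)) (k+1)))) {1..l}
           = rows_rank (chain_row c x i) {1..l-1} + 1"
proof -
  obtain b where b: "sop b (x (i 1)) (x j) \<notin> span (chain_row c x i ` {1..l-1})"
    using exists_sop_not_in_span[OF assms(2)] by blast
  have "{1..l} = insert l {1..l-1}" using assms(1) by auto
  moreover have "(\<lambda>k. sop ((c(l := b)) k) (x (i 1)) (x ((i(l+1 := j)) (k+1)))) ` {1..l-1}
      = chain_row c x i ` {1..l-1}"
    by (intro image_cong) (auto simp: chain_row_def)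
  ultimately have "(\<lambda>k. sop ((c(l := b)) k) (x (i 1)) (x ((i(l+1 := j)) (k+1)))) ` {1..l}
      = insert (sop b (x (i 1)) (x j)) (chain_row c x i ` {1..l-1})"
    by simp
  then show ?thesis using b by (intro exI[of _ b]) (simp add: rows_rank_def dim_insert)
qed

section \<open>The extension step\<close>

lemma exists_tie_on_line:
  fixes x :: "nat \<Rightarrow> real^'p"
  assumes "finite M" "m \<in> M" "x a \<bullet> d \<noteq> 0 \<or> x m \<bullet> d \<noteq> 0"
  shows "\<exists>j\<in>M. \<exists>t. (x a \<bullet> d \<noteq> 0 \<or> x j \<bullet> d \<noteq> 0)
           \<and> (resid x y j (\<beta> + t *\<^sub>R d))\<^sup>2 = (resid x y a (\<beta> + t *\<^sub>R d))\<^sup>2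
           \<and> (\<forall>k\<in>M. same_sign_or_zero
                 ((resid x y k (\<beta> + t *\<^sub>R d))\<^sup>2 - (resid x y a (\<beta> + t *\<^sub>R d))\<^sup>2)
                 ((resid x y k \<beta>)\<^sup>2 - (resid x y a \<beta>)\<^sup>2))"
proof -
  define \<rho> where "\<rho> p = sop (snd p) (resid x y (fst p) \<beta>) (resid x y a \<beta>)" for p
  define \<alpha> where "\<alpha> p = sop (snd p) (x (fst p) \<bullet> d) (x a \<bullet> d)" for p
  have along_line: "sop s (resid x y k (\<beta> + t *\<^sub>R d)) (resid x y a (\<beta> + t *\<^sub>R d))
      = \<rho> (k, s) - \<alpha> (k, s) * t" for k s t
    unfolding \<rho>_def \<alpha>_def resid_add_scaleR by (cases s) (simp_all add: sop_def algebra_simps)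
  have moving: "(\<exists>s. \<alpha> (k, s) \<noteq> 0) \<longleftrightarrow> x a \<bullet> d \<noteq> 0 \<or> x k \<bullet> d \<noteq> 0" for k
    using sop_eq_0_iff_all[of "x k \<bullet> d" "x a \<bullet> d"] by (simp add: \<alpha>_def) blast
  obtain s0 where "\<alpha> (m, s0) \<noteq> 0"
    using moving assms(3) by blast
  moreover have "finite (M \<times> (UNIV :: bool set))" "(m, s0) \<in> M \<times> UNIV"
    using assms(1,2) by simp_all
  ultimately obtain p t where p: "p \<in> M \<times> UNIV" "\<alpha> p \<noteq> 0" "\<rho> p - \<alpha> p * t = 0"
    and nearest: "\<forall>p'\<in>M \<times> UNIV. same_sign_or_zero (\<rho> p' - \<alpha> p' * t) (\<rho> p')"
    using exists_nearest_root[of "M \<times> UNIV" "(m, s0)" \<alpha> \<rho>] by blast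
  obtain j s where j: "p = (j, s)" "j \<in> M" using p(1) by auto
  have "sop s (resid x y j (\<beta> + t *\<^sub>R d)) (resid x y a (\<beta> + t *\<^sub>R d)) = 0"
    using p(3) unfolding along_line j(1) .
  then have "(resid x y j (\<beta> + t *\<^sub>R d))\<^sup>2 = (resid x y a (\<beta> + t *\<^sub>R d))\<^sup>2"
    by (rule sop_eq_0_imp_sq_eq)
  moreover have "x a \<bullet> d \<noteq> 0 \<or> x j \<bullet> d \<noteq> 0"
    using p(2) j(1) moving by blast
  moreover have "same_sign_or_zero
      ((resid x y k (\<beta> + t *\<^sub>R d))\<^sup>2 - (resid x y a (\<beta> + t *\<^sub>R d))\<^sup>2)
      ((resid x y k \<beta>)\<^sup>2 - (resid x y a \<beta>)\<^sup>2)" if "k \<in> M" for k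
  proof -
    have "same_sign_or_zero (\<rho> (k, s) - \<alpha> (k, s) * t) (\<rho> (k, s))" for s
      using nearest that by blast
    then show ?thesis
      unfolding sq_diff_eq_sop_mult along_line
      by (intro same_sign_or_zero_mult) (simp_all add: \<rho>_def)
  qed
  ultimately show ?thesis using j(2) by blast
qed

lemma exists_tie_extension:
  fixes x :: "nat \<Rightarrow> real^'p" and c :: "nat \<Rightarrow> bool" and i :: "nat \<Rightarrow> nat" and l :: nat
  defines "V \<equiv> span (chain_row c x i ` {1..l-1})"
  assumes system: "\<forall>k\<in>{1..l-1}. chain_row c x i k \<bullet> \<beta>0 = chain_row c y i k"
    and h: "1 \<le> h" "h < n"
    and tie: "(resid x y (i 1) \<beta>0)\<^sup>2 = sq_resid_ord n x y h \<beta>0"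
      "sq_resid_ord n x y h \<beta>0 = sq_resid_ord n x y (h+1) \<beta>0"
    and m: "m \<in> {1..n} - i ` {1..l}" "x (i 1) \<notin> V \<or> x m \<notin> V"
  shows "\<exists>j\<in>{1..n} - i ` {1..l}. (x (i 1) \<notin> V \<or> x j \<notin> V)
           \<and> (\<exists>\<beta>1. (\<forall>k\<in>{1..l}. (resid x y (i k) \<beta>1)\<^sup>2 = (resid x y (i 1) \<beta>1)\<^sup>2)
                  \<and> (resid x y j \<beta>1)\<^sup>2 = (resid x y (i 1) \<beta>1)\<^sup>2
                  \<and> (resid x y (i 1) \<beta>1)\<^sup>2 = sq_resid_ord n x y h \<beta>1
                  \<and> sq_resid_ord n x y h \<beta>1 = sq_resid_ord n x y (h+1) \<beta>1)"
proof -
  let ?M = "{1..n} - i ` {1..l}"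
  obtain d where d_orth: "\<forall>w\<in>V. w \<bullet> d = 0" and d_moves: "x (i 1) \<bullet> d \<noteq> 0 \<or> x m \<bullet> d \<noteq> 0"
    using m(2) exists_orthogonal_witness unfolding V_def by metis
  obtain j t where j: "j \<in> ?M" "x (i 1) \<bullet> d \<noteq> 0 \<or> x j \<bullet> d \<noteq> 0"
    and tie_j: "(resid x y j (\<beta>0 + t *\<^sub>R d))\<^sup>2 = (resid x y (i 1) (\<beta>0 + t *\<^sub>R d))\<^sup>2"
    and order: "\<forall>k\<in>?M. same_sign_or_zero
       ((resid x y k (\<beta>0 + t *\<^sub>R d))\<^sup>2 - (resid x y (i 1) (\<beta>0 + t *\<^sub>R d))\<^sup>2)
       ((resid x y k \<beta>0)\<^sup>2 - (resid x y (i 1) \<beta>0)\<^sup>2)"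
    using exists_tie_on_line[OF _ m(1) d_moves, of y \<beta>0] by blast
  define \<beta>1 where "\<beta>1 = \<beta>0 + t *\<^sub>R d"
  have "\<forall>k\<in>{1..l-1}. chain_row c x i k \<bullet> \<beta>1 = chain_row c y i k"
    using system d_orth by (simp add: \<beta>1_def V_def inner_add_right span_base)
  then have chain_tie: "\<forall>k\<in>{1..l}. (resid x y (i k) \<beta>1)\<^sup>2 = (resid x y (i 1) \<beta>1)\<^sup>2"
    using chain_sq_resid_eq by blast
  have "\<forall>k\<in>{1..n}. same_sign_or_zero
      ((resid x y k \<beta>1)\<^sup>2 - (resid x y (i 1) \<beta>1)\<^sup>2)
      ((resid x y k \<beta>0)\<^sup>2 - (resid x y (i 1) \<beta>0)\<^sup>2)"
    using order chain_tie by (auto simp: \<beta>1_def same_sign_or_zero_def)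
  then have "sq_resid_ord n x y h \<beta>1 = (resid x y (i 1) \<beta>1)\<^sup>2"
    and "sq_resid_ord n x y (h+1) \<beta>1 = (resid x y (i 1) \<beta>1)\<^sup>2"
    using sq_resid_ord_transfer[OF _ _ _ tie(1)[symmetric]]
      sq_resid_ord_transfer[OF _ _ _ tie(2)[symmetric, folded tie(1)]] h
    by simp_all
  then have "(resid x y (i 1) \<beta>1)\<^sup>2 = sq_resid_ord n x y h \<beta>1"
    and "sq_resid_ord n x y h \<beta>1 = sq_resid_ord n x y (h+1) \<beta>1"
    by simp_all
  moreover have "(resid x y j \<beta>1)\<^sup>2 = (resid x y (i 1) \<beta>1)\<^sup>2"
    using tie_j by (simp add: \<beta>1_def)
  moreover have "x (i 1) \<notin> V \<or> x j \<notin> V"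
    using j(2) d_orth by auto
  ultimately show ?thesis
    using j(1) chain_tie by blast
qed

lemma exists_index_outside_chain_span:
  fixes x :: "nat \<Rightarrow> real^'p" and c :: "nat \<Rightarrow> bool" and i :: "nat \<Rightarrow> nat" and l :: nat
  defines "V \<equiv> span (chain_row c x i ` {1..l-1})"
  assumes "rows_rank (chain_row c x i) {1..l-1} < rows_rank (\<lambda>k. x 1 + x (k+1)) {1..n-1}"
    and "l < n"
  shows "\<exists>m\<in>{1..n} - i ` {1..l}. x (i 1) \<notin> V \<or> x m \<notin> V"
proof -
  obtain k where k: "k \<in> {1..n}" "x k \<notin> V"
    using exists_index_not_in_span[of "chain_row c x i ` {1..l-1}" x n] assms(2)
    unfolding V_def rows_rank_def dim_span by blast
  have "\<not> {1..n} \<subseteq> i ` {1..l}"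
  proof
    assume "{1..n} \<subseteq> i ` {1..l}"
    then have "card {1..n} \<le> card (i ` {1..l})"
      by (rule card_mono[rotated]) simp
    also have "\<dots> \<le> l"
      using card_image_le[of "{1..l}" i] by simp
    finally show False using assms(3) by simp
  qed
  then obtain m0 where m0: "m0 \<in> {1..n} - i ` {1..l}" by blast
  show ?thesis
  proof (cases "k \<in> i ` {1..l}")
    case True
    then obtain q where "q \<in> {1..l}" "k = i q" by blast
    then have "x (i 1) \<notin> V"
      using chain_member_in_span[of x i c l q] k(2) unfolding V_def by blast
    then show ?thesis using m0 by blast
  next
    case False
    then show ?thesis using k by blast
  qed
qed

theorem lemma5:
  fixes n h l :: nat and x :: "nat \<Rightarrow> real^'p" and y :: "nat \<Rightarrow> real"
    and i :: "nat \<Rightarrow> nat" and c :: "nat \<Rightarrow> bool"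
  assumes "CARD('p) < n" and "1 < CARD('p)"
    and "CARD('p) \<le> h" and "h < n"
    and "\<forall>s :: nat \<Rightarrow> bool.
           rows_rank (\<lambda>k. sop (s k) (x 1) (x (k+1))) {1..n-1} = CARD('p)"
    and "2 \<le> l" and "l \<le> CARD('p)"
    and "\<forall>k\<in>{1..l}. i k \<in> {1..n}" and "inj_on i {1..l}"
    and "rows_rank (\<lambda>k. sop (c k) (x (i 1)) (x (i (k+1)))) {1..l-1} = l - 1"
  shows "\<exists>j\<in>{1..n} - i ` {1..l}. \<exists>b.
           rows_rank (\<lambda>k. sop ((c(l := b)) k) (x (i 1)) (x ((i(l+1 := j)) (k+1)))) {1..l} = l
         \<and> ((\<exists>\<beta>. (\<forall>k\<in>{1..l-1}. sop (c k) (x (i 1)) (x (i (k+1))) \<bullet> \<beta>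
                                   = sop (c k) (y (i 1)) (y (i (k+1))))
                  \<and> (resid x y (i 1) \<beta>)\<^sup>2 = sq_resid_ord n x y h \<beta>
                  \<and> sq_resid_ord n x y h \<beta> = sq_resid_ord n x y (h+1) \<beta>)
            \<longrightarrow> (\<exists>\<beta>1. (\<forall>k\<in>{1..l}. (resid x y (i k) \<beta>1)\<^sup>2 = (resid x y (i 1) \<beta>1)\<^sup>2)
                     \<and> (resid x y j \<beta>1)\<^sup>2 = (resid x y (i 1) \<beta>1)\<^sup>2
                     \<and> (resid x y (i 1) \<beta>1)\<^sup>2 = sq_resid_ord n x y h \<beta>1
                     \<and> sq_resid_ord n x y h \<beta>1 = sq_resid_ord n x y (h+1) \<beta>1))"
proof -
  define V where "V = span (chain_row c x i ` {1..l-1})"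
  have rank: "rows_rank (chain_row c x i) {1..l-1} = l - 1"
    unfolding chain_row_def by (fact assms(10))
  have "rows_rank (\<lambda>k. x 1 + x (k+1)) {1..n-1} = CARD('p)"
    using assms(5)[rule_format, of "\<lambda>_. True"] by (simp add: sop_def)
  then have "rows_rank (chain_row c x i) {1..l-1} < rows_rank (\<lambda>k. x 1 + x (k+1)) {1..n-1}"
    and "l < n"
    using rank assms(1,6,7) by linarith+
  from exists_index_outside_chain_span[OF this, folded V_def]
  obtain m where m: "m \<in> {1..n} - i ` {1..l}" "x (i 1) \<notin> V \<or> x m \<notin> V"
    by blast
  have extend: "\<exists>b. rows_rank (\<lambda>k. sop ((c(l := b)) k) (x (i 1)) (x ((i(l+1 := j)) (k+1)))) {1..l} = l"
    if "x (i 1) \<notin> V \<or> x j \<notin> V" for j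
    using exists_rows_rank_chain_extension[OF _ that[unfolded V_def]] rank assms(6) by simp
  show ?thesis (is "\<exists>j\<in>_. \<exists>b. _ \<and> (?tie_before \<longrightarrow> ?tie_after j)")
  proof (cases ?tie_before)
    case True
    then obtain \<beta>0 where system: "\<forall>k\<in>{1..l-1}. chain_row c x i k \<bullet> \<beta>0 = chain_row c y i k"
      and tie: "(resid x y (i 1) \<beta>0)\<^sup>2 = sq_resid_ord n x y h \<beta>0"
        "sq_resid_ord n x y h \<beta>0 = sq_resid_ord n x y (h+1) \<beta>0"
      unfolding chain_row_def by blast
    have "1 \<le> h" using assms(2,3) by linarith
    from exists_tie_extension[OF system this assms(4) tie m[unfolded V_def], folded V_def]
    obtain j where "j \<in> {1..n} - i ` {1..l}" "x (i 1) \<notin> V \<or> x j \<notin> V" "?tie_after j"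
      by blast
    then show ?thesis using extend by blast
  next
    case False
    then show ?thesis using m extend by blast
  qed
qed

end
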